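(* Let $(E,\langle\cdot,\cdot\rangle,\rho)$ be a Courant vector bundle over $M$ with two pre-Courant algebroid structures $\circ$ and $\tilde\circ$ having Jacobiators $J$ and $\tilde J$. If there is $h\in\Omega^3(M)$ with $e_1\circ e_2-e_1\,\tilde\circ\,e_2=\rho^*\big(h(\rho(e_1),\rho(e_2),\cdot)\big)$ for all $e_1,e_2\in\Gamma(E)$, then $J^\flat-\tilde J^\flat=\rho^*(dh)$, i.e. $J^\flat(e_1,e_2,e_3,e_4)-\tilde J^\flat(e_1,e_2,e_3,e_4)=dh(\rho(e_1),\rho(e_2),\rho(e_3),\rho(e_4))$ for all $e_i\in\Gamma(E)$. In particular the two structures have the same Pontryagin class.
   Context: A Courant vector bundle over a smooth manifold $M$ is a vector bundle $E\to M$ with a fibrewise nondegenerate symmetric bilinear form $\langle\cdot,\cdot\rangle$ and a bundle map $\rho:E\to TM$ such that $\rho\circ\rho^*=0$, where $\rho^*:T^*M\to E^*\cong E$ is the dual of $\rho$ followed by the identification $E^*\cong E$ via $\langle\cdot,\cdot\rangle$. A pre-Courant algebroid structure on it is an $\mathbb R$-bilinear operation $\circ$ on $\Gamma(E)$ such that for all $e_1,e_2,e_3\in\Gamma(E)$: (i) $\rho(e_1\circ e_2)=[\rho(e_1),\rho(e_2)]$; (ii) $\langle e_1\circ e_1,e_2\rangle=\frac12\rho(e_2)\langle e_1,e_1\rangle$; (iii) $\rho(e_1)\langle e_2,e_3\rangle=\langle e_1\circ e_2,e_3\rangle+\langle e_2,e_1\circ e_3\rangle$. The Jacobiator is $J(e_1,e_2,e_3)=e_1\circ(e_2\circ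 e_3)-(e_1\circ e_2)\circ e_3-e_2\circ(e_1\circ e_3)$, and $J^\flat(e_1,e_2,e_3,e_4)=\langle J(e_1,e_2,e_3),e_4\rangle$. Two such 4-forms $H_1,H_2$ on $E$ are equivalent if $H_1-H_2=\rho^*(dh')$ for some $h'\in\Omega^3(M)$ (where $\rho^*$ of a form on $M$ means its pullback along $\rho$); the Pontryagin class of a pre-Courant algebroid is the equivalence class of $J^\flat$. *)

theory Defs
  imports Complex_Main
begin

text \<open>Algebraic (Lie--Rinehart style) model of a Courant vector bundle over a manifold M.
  Type 'f plays the role of C^\<infinity>(M), type 'v the vector fields on M (with
  C^\<infinity>(M)-module structure smv, Lie bracket br, action act X f = X(f)),
  type 'e the sections of E (with C^\<infinity>(M)-module structure sme).
  Differential k-forms are C^\<infinity>(M)-multilinear alternating maps on vector fields,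
  and the exterior derivative is given by the invariant (Koszul) formula.\<close>

definition is_module :: "('f::{comm_ring_1,real_algebra_1} \<Rightarrow> 'a::real_vector \<Rightarrow> 'a) \<Rightarrow> bool" where
  "is_module sm \<longleftrightarrow>
     (\<forall>f g x. sm (f * g) x = sm f (sm g x)) \<and> (\<forall>x. sm 1 x = x) \<and>
     (\<forall>f x y. sm f (x + y) = sm f x + sm f y) \<and>
     (\<forall>f g x. sm (f + g) x = sm f x + sm g x) \<and>
     (\<forall>r x. sm (of_real r) x = r *\<^sub>R x)"

definition real_bilinear :: "('a::real_vector \<Rightarrow> 'b::real_vector \<Rightarrow> 'c::real_vector) \<Rightarrow> bool" where
  "real_bilinear F \<longleftrightarrow> (\<forall>x. linear (F x)) \<and> (\<forall>y. linear (\<lambda>x. F x y))"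

definition vector_fields ::
  "('f::{comm_ring_1,real_algebra_1} \<Rightarrow> 'v::real_vector \<Rightarrow> 'v) \<Rightarrow> ('v \<Rightarrow> 'v \<Rightarrow> 'v) \<Rightarrow> ('v \<Rightarrow> 'f \<Rightarrow> 'f) \<Rightarrow> bool" where
  "vector_fields smv br act \<longleftrightarrow>
     is_module smv \<and> real_bilinear br \<and>
     (\<forall>X. br X X = 0) \<and>
     (\<forall>X Y Z. br X (br Y Z) = br (br X Y) Z + br Y (br X Z)) \<and>
     (\<forall>X. linear (act X)) \<and>
     (\<forall>X Y f. act (X + Y) f = act X f + act Y f) \<and>
     (\<forall>f X g. act (smv f X) g = f * act X g) \<and>
     (\<forall>X f g. act X (f * g) = act X f * g + f * act X g) \<and>
     (\<forall>X Y f. act (br X Y) f = act X (act Y f) - act Y (act X f)) \<and>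
     (\<forall>X Y f. br X (smv f Y) = smv f (br X Y) + smv (act X f) Y)"

definition form1 :: "('f::{comm_ring_1,real_algebra_1} \<Rightarrow> 'v::real_vector \<Rightarrow> 'v) \<Rightarrow> ('v \<Rightarrow> 'f) \<Rightarrow> bool" where
  "form1 smv \<alpha> \<longleftrightarrow> (\<forall>X Y. \<alpha> (X + Y) = \<alpha> X + \<alpha> Y) \<and> (\<forall>f X. \<alpha> (smv f X) = f * \<alpha> X)"

definition form3 :: "('f::{comm_ring_1,real_algebra_1} \<Rightarrow> 'v::real_vector \<Rightarrow> 'v) \<Rightarrow> ('v \<Rightarrow> 'v \<Rightarrow> 'v \<Rightarrow> 'f) \<Rightarrow> bool" where
  "form3 smv h \<longleftrightarrow>
     (\<forall>Y Z. form1 smv (\<lambda>X. h X Y Z)) \<and> (\<forall>X Z. form1 smv (\<lambda>Y. h X Y Z)) \<and>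
     (\<forall>X Y. form1 smv (\<lambda>Z. h X Y Z)) \<and>
     (\<forall>X Y. h X X Y = 0) \<and> (\<forall>X Y. h X Y Y = 0) \<and> (\<forall>X Y. h X Y X = 0)"

definition d3 :: "('v \<Rightarrow> 'v \<Rightarrow> 'v) \<Rightarrow> ('v \<Rightarrow> 'f::{comm_ring_1,real_algebra_1} \<Rightarrow> 'f) \<Rightarrow> ('v \<Rightarrow> 'v \<Rightarrow> 'v \<Rightarrow> 'f)
    \<Rightarrow> 'v \<Rightarrow> 'v \<Rightarrow> 'v \<Rightarrow> 'v \<Rightarrow> 'f" where
  "d3 br act h X0 X1 X2 X3 =
      act X0 (h X1 X2 X3) - act X1 (h X0 X2 X3) + act X2 (h X0 X1 X3) - act X3 (h X0 X1 X2)
    - h (br X0 X1) X2 X3 + h (br X0 X2) X1 X3 - h (br X0 X3) X1 X2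
    - h (br X1 X2) X0 X3 + h (br X1 X3) X0 X2 - h (br X2 X3) X0 X1"

text \<open>rho^* of a 1-form, via the identification E^* = E given by the pairing.\<close>
definition rho_star :: "('e \<Rightarrow> 'e \<Rightarrow> 'f) \<Rightarrow> ('e \<Rightarrow> 'v) \<Rightarrow> ('v \<Rightarrow> 'f) \<Rightarrow> 'e" where
  "rho_star ip rho \<alpha> = (THE s. \<forall>e. ip s e = \<alpha> (rho e))"

definition courant_vb ::
  "('f::{comm_ring_1,real_algebra_1} \<Rightarrow> 'v::real_vector \<Rightarrow> 'v) \<Rightarrow> ('v \<Rightarrow> 'v \<Rightarrow> 'v) \<Rightarrow> ('v \<Rightarrow> 'f \<Rightarrow> 'f)
   \<Rightarrow> ('f \<Rightarrow> 'e::real_vector \<Rightarrow> 'e) \<Rightarrow> ('e \<Rightarrow> 'e \<Rightarrow> 'f) \<Rightarrow> ('e \<Rightarrow> 'v) \<Rightarrow> bool" where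
  "courant_vb smv br act sme ip rho \<longleftrightarrow>
     vector_fields smv br act \<and> is_module sme \<and>
     (\<forall>x y. ip x y = ip y x) \<and>
     (\<forall>x y z. ip (x + y) z = ip x z + ip y z) \<and>
     (\<forall>f x y. ip (sme f x) y = f * ip x y) \<and>
     (\<forall>x. (\<forall>y. ip x y = 0) \<longrightarrow> x = 0) \<and>
     (\<forall>\<alpha>. form1 sme \<alpha> \<longrightarrow> (\<exists>s. \<forall>y. ip s y = \<alpha> y)) \<and>
     (\<forall>x y. rho (x + y) = rho x + rho y) \<and>
     (\<forall>f x. rho (sme f x) = smv f (rho x)) \<and>
     (\<forall>\<alpha>. form1 smv \<alpha> \<longrightarrow> rho (rho_star ip rho \<alpha>) = 0)"

definition pre_courant ::
  "('v::real_vector \<Rightarrow> 'v \<Rightarrow> 'v) \<Rightarrow> ('v \<Rightarrow> 'f::{comm_ring_1,real_algebra_1} \<Rightarrow> 'f)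
   \<Rightarrow> ('e::real_vector \<Rightarrow> 'e \<Rightarrow> 'f) \<Rightarrow> ('e \<Rightarrow> 'v) \<Rightarrow> ('e \<Rightarrow> 'e \<Rightarrow> 'e) \<Rightarrow> bool" where
  "pre_courant br act ip rho circ \<longleftrightarrow>
     real_bilinear circ \<and>
     (\<forall>e1 e2. rho (circ e1 e2) = br (rho e1) (rho e2)) \<and>
     (\<forall>e1 e2. ip (circ e1 e1) e2 = (1/2) *\<^sub>R act (rho e2) (ip e1 e1)) \<and>
     (\<forall>e1 e2 e3. act (rho e1) (ip e2 e3) = ip (circ e1 e2) e3 + ip e2 (circ e1 e3))"

definition jacobiator :: "('e::real_vector \<Rightarrow> 'e \<Rightarrow> 'e) \<Rightarrow> 'e \<Rightarrow> 'e \<Rightarrow> 'e \<Rightarrow> 'e" where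
  "jacobiator circ e1 e2 e3 = circ e1 (circ e2 e3) - circ (circ e1 e2) e3 - circ e2 (circ e1 e3)"

definition jflat :: "('e \<Rightarrow> 'e \<Rightarrow> 'f) \<Rightarrow> ('e::real_vector \<Rightarrow> 'e \<Rightarrow> 'e) \<Rightarrow> 'e \<Rightarrow> 'e \<Rightarrow> 'e \<Rightarrow> 'e \<Rightarrow> 'f" where
  "jflat ip circ e1 e2 e3 e4 = ip (jacobiator circ e1 e2 e3) e4"

definition equiv4 ::
  "('f::{comm_ring_1,real_algebra_1} \<Rightarrow> 'v::real_vector \<Rightarrow> 'v) \<Rightarrow> ('v \<Rightarrow> 'v \<Rightarrow> 'v) \<Rightarrow> ('v \<Rightarrow> 'f \<Rightarrow> 'f)
   \<Rightarrow> ('e \<Rightarrow> 'v) \<Rightarrow> ('e \<Rightarrow> 'e \<Rightarrow> 'e \<Rightarrow> 'e \<Rightarrow> 'f) \<Rightarrow> ('e \<Rightarrow> 'e \<Rightarrow> 'e \<Rightarrow> 'e \<Rightarrow> 'f) \<Rightarrow> bool" where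
  "equiv4 smv br act rho H1 H2 \<longleftrightarrow>
     (\<exists>h'. form3 smv h' \<and>
        (\<forall>e1 e2 e3 e4. H1 e1 e2 e3 e4 - H2 e1 e2 e3 e4 = d3 br act h' (rho e1) (rho e2) (rho e3) (rho e4)))"

end

theory Submission
  imports Defs
begin

text \<open>Write the deformation as \<open>e\<^sub>1 \<circ> e\<^sub>2 = e\<^sub>1 \<circ>' e\<^sub>2 + H e\<^sub>1 e\<^sub>2\<close> with
  \<open>\<langle>H a b, c\<rangle> = h(\<rho>a, \<rho>b, \<rho>c)\<close>. Expanding each of the three terms of the Jacobiator by
  bilinearity, the correction terms \<open>\<langle>a \<circ>' H b c, d\<rangle>\<close> and \<open>\<langle>H a b \<circ>' c, d\<rangle>\<close> are rewritten
  with the invariance of the pairing (and, for the latter, with the symmetric part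
  \<open>a \<circ>' b + b \<circ>' a = \<rho>\<^sup>* d\<langle>a, b\<rangle>\<close>), and \<open>\<rho>\<close> turns brackets of sections into brackets of
  vector fields. What remains is exactly the ten terms of the invariant formula for
  \<open>dh(\<rho>e\<^sub>1, \<rho>e\<^sub>2, \<rho>e\<^sub>3, \<rho>e\<^sub>4)\<close>, once \<open>h\<close> is put in normal form by its antisymmetry.\<close>

lemma form3_swap12:
  assumes "form3 smv h"
  shows "h Y X Z = - h X Y Z"
proof -
  have add: "h (X + Y) W Z = h X W Z + h Y W Z" "h W (X + Y) Z = h W X Z + h W Y Z" for X Y W
    using assms by (simp_all add: form3_def form1_def)
  have "0 = h (X + Y) (X + Y) Z" "h X X Z = 0" "h Y Y Z = 0"
    using assms by (simp_all add: form3_def)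
  then have "h X Y Z + h Y X Z = 0"
    unfolding add by (simp add: algebra_simps)
  then show ?thesis
    by (simp add: eq_neg_iff_add_eq_0 add.commute)
qed

lemma form3_swap23:
  assumes "form3 smv h"
  shows "h X Z Y = - h X Y Z"
proof -
  have add: "h X (Y + Z) W = h X Y W + h X Z W" "h X W (Y + Z) = h X W Y + h X W Z" for Y Z W
    using assms by (simp_all add: form3_def form1_def)
  have "0 = h X (Y + Z) (Y + Z)" "h X Y Y = 0" "h X Z Z = 0"
    using assms by (simp_all add: form3_def)
  then have "h X Y Z + h X Z Y = 0"
    unfolding add by (simp add: algebra_simps)
  then show ?thesis
    by (simp add: eq_neg_iff_add_eq_0 add.commute)
qed

lemma form3_cyclic:
  assumes "form3 smv h"
  shows "h X Y Z = h Z X Y"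
  using form3_swap12[OF assms, of Z X Y] form3_swap23[OF assms, of Z Y X]
    form3_swap12[OF assms, of Y Z X] form3_swap23[OF assms, of X Z Y]
  by simp

lemma real_bilinear_add:
  assumes "real_bilinear F"
  shows "F (x + y) z = F x z + F y z" and "F z (x + y) = F z x + F z y"
  using assms linear_add[of "\<lambda>x. F x z"] linear_add[of "F z"] unfolding real_bilinear_def by auto

locale courant_vector_bundle =
  fixes smv :: "'f::{comm_ring_1,real_algebra_1} \<Rightarrow> 'v::real_vector \<Rightarrow> 'v"
    and br :: "'v \<Rightarrow> 'v \<Rightarrow> 'v" and act :: "'v \<Rightarrow> 'f \<Rightarrow> 'f"
    and sme :: "'f \<Rightarrow> 'e::real_vector \<Rightarrow> 'e" and ip :: "'e \<Rightarrow> 'e \<Rightarrow> 'f" and rho :: "'e \<Rightarrow> 'v"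
  assumes courant: "courant_vb smv br act sme ip rho"
begin

lemma ip_sym: "ip x y = ip y x"
  using courant unfolding courant_vb_def by blast

lemma ip_add_left: "ip (x + y) z = ip x z + ip y z"
  using courant unfolding courant_vb_def by blast

lemma ip_add_right: "ip z (x + y) = ip z x + ip z y"
  using ip_add_left ip_sym by metis

lemma ip_diff_left: "ip (x - y) z = ip x z - ip y z"
  using ip_add_left[of "x - y" y z] by (simp add: algebra_simps)

lemma ip_nondegenerate: "(\<And>y. ip x y = 0) \<Longrightarrow> x = 0"
  using courant unfolding courant_vb_def by blast

lemma rho_add: "rho (x + y) = rho x + rho y"
  using courant unfolding courant_vb_def by blast

lemma rho_scale: "rho (sme f x) = smv f (rho x)"
  using courant unfolding courant_vb_def by blast

lemma linear_act: "linear (act X)"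
  using courant by (simp add: courant_vb_def vector_fields_def)

lemma rho_star_pairing:
  assumes "form1 smv \<alpha>"
  shows "ip (rho_star ip rho \<alpha>) e = \<alpha> (rho e)"
proof -
  have "form1 sme (\<lambda>y. \<alpha> (rho y))"
    using assms by (simp add: form1_def rho_add rho_scale)
  then obtain s where s: "\<forall>y. ip s y = \<alpha> (rho y)"
    using courant unfolding courant_vb_def by blast
  have "\<forall>y. ip (rho_star ip rho \<alpha>) y = \<alpha> (rho y)"
    unfolding rho_star_def
  proof (rule theI[of _ s])
    fix t assume "\<forall>y. ip t y = \<alpha> (rho y)"
    with s have "t - s = 0"
      by (intro ip_nondegenerate) (simp add: ip_diff_left)
    then show "t = s" by simp
  qed (fact s)
  then show ?thesis by blast
qed

lemma pre_courant_symmetric_part: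
  assumes "pre_courant br act ip rho circ"
  shows "ip (circ a b) c + ip (circ b a) c = act (rho c) (ip a b)"
proof -
  have bilinear: "real_bilinear circ"
    using assms unfolding pre_courant_def by blast
  have square: "ip (circ x x) c = (1/2) *\<^sub>R act (rho c) (ip x x)" for x
    using assms unfolding pre_courant_def by blast
  let ?t = "act (rho c) (ip a b)"
  have "ip (a + b) (a + b) = ip a a + ip b b + (ip a b + ip a b)"
    by (simp add: ip_add_left ip_add_right ip_sym[of b a] algebra_simps)
  then have "act (rho c) (ip (a + b) (a + b))
      = act (rho c) (ip a a) + act (rho c) (ip b b) + (?t + ?t)"
    by (simp only: linear_add[OF linear_act])
  then have "ip (circ (a + b) (a + b)) c
      = ip (circ a a) c + ip (circ b b) c + (1/2) *\<^sub>R (?t + ?t)"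
    by (simp only: square scaleR_add_right)
  moreover have "ip (circ (a + b) (a + b)) c
      = ip (circ a a) c + ip (circ b b) c + (ip (circ a b) c + ip (circ b a) c)"
    by (simp add: real_bilinear_add[OF bilinear] ip_add_left algebra_simps)
  moreover have "(1/2) *\<^sub>R (?t + ?t) = ?t"
    by (simp flip: scaleR_add_right add: scaleR_add_left[symmetric])
  ultimately show ?thesis
    by simp
qed

end

locale courant_deformation = courant_vector_bundle +
  fixes circ circ' :: "'e::real_vector \<Rightarrow> 'e \<Rightarrow> 'e"
    and h :: "'v::real_vector \<Rightarrow> 'v \<Rightarrow> 'v \<Rightarrow> 'f::{comm_ring_1,real_algebra_1}"
  assumes pre: "pre_courant br act ip rho circ"
    and pre': "pre_courant br act ip rho circ'"
    and h: "form3 smv h"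
    and deformation: "\<forall>e1 e2. circ e1 e2 - circ' e1 e2 = rho_star ip rho (\<lambda>X. h (rho e1) (rho e2) X)"
begin

abbreviation H :: "'e \<Rightarrow> 'e \<Rightarrow> 'e" where
  "H a b \<equiv> rho_star ip rho (h (rho a) (rho b))"

lemma circ_deformation: "circ a b = circ' a b + H a b"
  using deformation by (metis diff_add_cancel add.commute)

lemma ip_rho_star_h: "ip (rho_star ip rho (h X Y)) c = h X Y (rho c)"
  using h by (intro rho_star_pairing) (simp add: form3_def)

lemma rho_circ: "rho (circ a b) = br (rho a) (rho b)" "rho (circ' a b) = br (rho a) (rho b)"
  using pre pre' by (simp_all add: pre_courant_def)

lemma circ'_add: "circ' (x + y) z = circ' x z + circ' y z" "circ' z (x + y) = circ' z x + circ' z y"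
  using pre' unfolding pre_courant_def by (simp_all add: real_bilinear_add)

lemma ip_circ'_invariant: "act (rho a) (ip b c) = ip (circ' a b) c + ip b (circ' a c)"
  using pre' by (simp add: pre_courant_def)

lemma ip_circ'_H_right:
  "ip (circ' a (H b c)) d
     = act (rho a) (h (rho b) (rho c) (rho d)) - h (rho b) (rho c) (br (rho a) (rho d))"
  using ip_circ'_invariant[of a "H b c" d] by (simp add: ip_rho_star_h rho_circ)

lemma ip_circ'_H_left:
  "ip (circ' (H a b) c) d = act (rho d) (h (rho a) (rho b) (rho c))
     - act (rho c) (h (rho a) (rho b) (rho d)) + h (rho a) (rho b) (br (rho c) (rho d))"
proof -
  have "ip (circ' (H a b) c) d = act (rho d) (ip (H a b) c) - ip (circ' c (H a b)) d"
    using pre_courant_symmetric_part[OF pre', of "H a b" c d] by (simp add: algebra_simps)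
  then show ?thesis
    by (simp add: ip_rho_star_h ip_circ'_H_right)
qed

lemma ip_circ_nested_right:
  "ip (circ a (circ b c)) d = ip (circ' a (circ' b c)) d
     + act (rho a) (h (rho b) (rho c) (rho d)) - h (rho b) (rho c) (br (rho a) (rho d))
     + h (rho a) (br (rho b) (rho c)) (rho d)"
proof -
  have "ip (circ a (circ b c)) d = ip (circ' a (circ b c)) d + h (rho a) (br (rho b) (rho c)) (rho d)"
    by (simp add: circ_deformation[of a] ip_add_left ip_rho_star_h rho_circ)
  also have "ip (circ' a (circ b c)) d = ip (circ' a (circ' b c)) d + ip (circ' a (H b c)) d"
    by (simp add: circ_deformation[of b] circ'_add ip_add_left)
  finally show ?thesis
    by (simp add: ip_circ'_H_right)
qed

lemma ip_circ_nested_left: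
  "ip (circ (circ a b) c) d = ip (circ' (circ' a b) c) d
     + act (rho d) (h (rho a) (rho b) (rho c)) - act (rho c) (h (rho a) (rho b) (rho d))
     + h (rho a) (rho b) (br (rho c) (rho d)) + h (br (rho a) (rho b)) (rho c) (rho d)"
proof -
  have "ip (circ (circ a b) c) d = ip (circ' (circ a b) c) d + h (br (rho a) (rho b)) (rho c) (rho d)"
    by (simp add: circ_deformation[of "circ a b"] ip_add_left ip_rho_star_h rho_circ)
  also have "ip (circ' (circ a b) c) d = ip (circ' (circ' a b) c) d + ip (circ' (H a b) c) d"
    by (simp add: circ_deformation[of a] circ'_add ip_add_left)
  finally show ?thesis
    by (simp add: ip_circ'_H_left)
qed

lemma jflat_deformation:
  "jflat ip circ e1 e2 e3 e4 - jflat ip circ' e1 e2 e3 e4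
     = d3 br act h (rho e1) (rho e2) (rho e3) (rho e4)"
  unfolding jflat_def jacobiator_def d3_def ip_diff_left
    ip_circ_nested_right[of e1] ip_circ_nested_right[of e2] ip_circ_nested_left
  using form3_swap12[OF h, of "rho e2" "br (rho e1) (rho e3)"]
    form3_swap12[OF h, of "rho e1" "br (rho e2) (rho e3)"]
    form3_cyclic[OF h, of "rho e1" "rho e3" "br (rho e2) (rho e4)"]
    form3_cyclic[OF h, of "rho e2" "rho e3" "br (rho e1) (rho e4)"]
    form3_cyclic[OF h, of "rho e1" "rho e2" "br (rho e3) (rho e4)"]
  by (simp add: algebra_simps)

end

theorem proposition4p5:
  fixes smv :: "'f::{comm_ring_1,real_algebra_1} \<Rightarrow> 'v::real_vector \<Rightarrow> 'v"
    and br :: "'v \<Rightarrow> 'v \<Rightarrow> 'v" and act :: "'v \<Rightarrow> 'f \<Rightarrow> 'f"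
    and sme :: "'f \<Rightarrow> 'e::real_vector \<Rightarrow> 'e" and ip :: "'e \<Rightarrow> 'e \<Rightarrow> 'f" and rho :: "'e \<Rightarrow> 'v"
    and circ circ' :: "'e \<Rightarrow> 'e \<Rightarrow> 'e" and h :: "'v \<Rightarrow> 'v \<Rightarrow> 'v \<Rightarrow> 'f"
  assumes "courant_vb smv br act sme ip rho"
    and "pre_courant br act ip rho circ"
    and "pre_courant br act ip rho circ'"
    and "form3 smv h"
    and "\<forall>e1 e2. circ e1 e2 - circ' e1 e2 = rho_star ip rho (\<lambda>X. h (rho e1) (rho e2) X)"
  shows "(\<forall>e1 e2 e3 e4. jflat ip circ e1 e2 e3 e4 - jflat ip circ' e1 e2 e3 e4
            = d3 br act h (rho e1) (rho e2) (rho e3) (rho e4))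
       \<and> equiv4 smv br act rho (jflat ip circ) (jflat ip circ')"
proof -
  interpret courant_deformation smv br act sme ip rho circ circ' h
    using assms by unfold_locales
  show ?thesis
    using jflat_deformation \<open>form3 smv h\<close> unfolding equiv4_def by blast
qed

end
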